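(* Assume (A2) and (B2) (see context). Let $\varphi\in\mathcal{D}([0,\infty)\times\mathbb{R}^d)$ and, for $\varepsilon>0$, let $$\chi^\varepsilon(t,x,v):=\int_0^\infty\lceil v\rfloor^{-\beta}\tilde\nu_\varepsilon(x,v,z)\,e^{-\int_0^z\lceil v\rfloor^{-\beta}\tilde\nu_\varepsilon(x,v,s)\,\mathrm{d}s}\,\varphi(t,x+\varepsilon\lceil v\rfloor^{-\beta}vz)\,\mathrm{d}z,$$ where $\tilde\nu_\varepsilon(x,v,z):=\nu(x+\varepsilon\lceil v\rfloor^{-\beta}vz,v)$ (i.e. $\chi^\varepsilon$ solves $\lceil v\rfloor^{-\beta}\nu\chi^\varepsilon-\varepsilon\lceil v\rfloor^{-\beta}v\cdot\nabla_x\chi^\varepsilon=\lceil v\rfloor^{-\beta}\nu\varphi$). Then $$\int_0^\infty\!\!\int_{\mathbb{R}^{2d}}F(v)[\chi^\varepsilon-\varphi]^2\,\mathrm{d}x\,\mathrm{d}v\,\mathrm{d}t\to0,\qquad\int_0^\infty\!\!\int_{\mathbb{R}^{2d}}F(v)[\partial_t\chi^\varepsilon-\partial_t\varphi]^2\,\mathrm{d}x\,\mathrm{d}v\,\mathrm{d}t\to0$$ as $\varepsilon\to0$, and there is $C>0$ (independent of $\varepsilon$) with $$\|\chi^\varepsilon\|_{L^2_F((0,\infty)\times\mathbb{R}^{2d})}\le C\|\varphi\|_{L^2((0,\infty)\times\mathbb{R}^d)},\qquad\|\partial_t\chi^\varepsilon\|_{L^2_F((0,\infty)\times\mathbb{R}^{2d})}\le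 C\|\partial_t\varphi\|_{L^2((0,\infty)\times\mathbb{R}^d)}.$$
   Context: Let $d\ge1$, $\sigma(x,v,v')\ge0$, $\nu(x,v):=\int\sigma(x,v',v)\,\mathrm{d}v'$, $Q(f):=\int[\sigma(x,v,v')f(v')-\sigma(x,v',v)f(v)]\,\mathrm{d}v'$, $\langle v\rangle=(1+|v|^2)^{1/2}$. $L^2_F$ denotes $L^2$ with measure $F\,\mathrm{d}t\,\mathrm{d}x\,\mathrm{d}v$. $\lceil v\rfloor^{-\beta}:=1$ for $|v|\le1$ and $:=|v|^{-\beta}$ for $|v|\ge1$. (A2) There is $F\in L^1_\nu(\mathbb{R}^d)$ independent of $x$ with $Q(F)=0$, $F>0$, $\int F\,\mathrm{d}v=1$. (B2) There are $\nu_1,\nu_2>0$, a function $\nu_0(x)$ and $\beta\in\mathbb{R}$ with $\nu_1\langle v\rangle^\beta\le\nu(x,v)\le\nu_2\langle v\rangle^\beta$ for all $x,v$, $|v|^{-\beta}\nu(x,v)\to\nu_0(x)$ as $|v|\to\infty$ uniformly in $x$, $\nu$ is $C^1$ in $x$ and $\|\langle v\rangle^{-\beta}\partial_x\nu\|_{L^\infty(\mathbb{R}^{2d})}\le C$. (As used in the paper, (B2) implies $\nu_1\le\lceil v\rfloor^{-\beta}\nu(x,v)\le\nu_2$ up to constants.) *)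

theory Defs
  imports "HOL-Analysis.Analysis"
begin

definition jbr :: "'a::euclidean_space \<Rightarrow> real" where
  "jbr v = sqrt (1 + (norm v)^2)"

definition lcw :: "real \<Rightarrow> 'a::euclidean_space \<Rightarrow> real" where
  "lcw \<beta> v = (if norm v \<le> 1 then 1 else norm v powr (- \<beta>))"

definition nu :: "('a::euclidean_space \<Rightarrow> 'a \<Rightarrow> 'a \<Rightarrow> real) \<Rightarrow> 'a \<Rightarrow> 'a \<Rightarrow> real" where
  "nu \<sigma> x v = (\<integral>v'. \<sigma> x v' v \<partial>lborel)"

definition Qop :: "('a::euclidean_space \<Rightarrow> 'a \<Rightarrow> 'a \<Rightarrow> real) \<Rightarrow> ('a \<Rightarrow> real) \<Rightarrow> 'a \<Rightarrow> 'a \<Rightarrow> real" where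
  "Qop \<sigma> f x v = (\<integral>v'. (\<sigma> x v v' * f v' - \<sigma> x v' v * f v) \<partial>lborel)"

fun Ck :: "nat \<Rightarrow> ('a::euclidean_space \<Rightarrow> real) \<Rightarrow> bool" where
  "Ck 0 f = continuous_on UNIV f"
| "Ck (Suc k) f = ((\<forall>x. f differentiable (at x)) \<and>
      (\<forall>b\<in>Basis. Ck k (\<lambda>x. frechet_derivative f (at x) b)))"

definition smooth_fun :: "('a::euclidean_space \<Rightarrow> real) \<Rightarrow> bool" where
  "smooth_fun f = (\<forall>k. Ck k f)"

definition test_fun :: "('a::euclidean_space \<Rightarrow> real) \<Rightarrow> bool" where
  "test_fun f = (smooth_fun f \<and> compact (closure {p. f p \<noteq> 0}))"

definition chi :: "('a::euclidean_space \<Rightarrow> 'a \<Rightarrow> real) \<Rightarrow> real \<Rightarrow> (real \<times> 'a \<Rightarrow> real)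
                   \<Rightarrow> real \<Rightarrow> real \<Rightarrow> 'a \<Rightarrow> 'a \<Rightarrow> real" where
  "chi \<nu> \<beta> \<phi> \<epsilon> t x v =
     (let nut = (\<lambda>z. \<nu> (x + (\<epsilon> * lcw \<beta> v * z) *\<^sub>R v) v) in
      LINT z:{0..}|lborel.
        lcw \<beta> v * nut z * exp (- (LINT s:{0..z}|lborel. lcw \<beta> v * nut s))
        * \<phi> (t, x + (\<epsilon> * lcw \<beta> v * z) *\<^sub>R v))"

definition L2F_sq :: "('a::euclidean_space \<Rightarrow> real) \<Rightarrow> (real \<Rightarrow> 'a \<Rightarrow> 'a \<Rightarrow> real) \<Rightarrow> ennreal" where
  "L2F_sq F g = (\<integral>\<^sup>+ p. indicator {0<..} (fst p) *
       ennreal (F (snd (snd p)) * (g (fst p) (fst (snd p)) (snd (snd p)))^2) \<partial>(lborel :: (real \<times> 'a \<times> 'a) measure))"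

definition L2_sq :: "(real \<Rightarrow> 'a::euclidean_space \<Rightarrow> real) \<Rightarrow> ennreal" where
  "L2_sq g = (\<integral>\<^sup>+ p. indicator {0<..} (fst p) * ennreal ((g (fst p) (snd p))^2)
       \<partial>(lborel :: (real \<times> 'a) measure))"

end

theory Submission
  imports Defs
begin

text \<open>
  The function \<open>chi\<close> averages \<open>\<phi>(t, \<cdot>)\<close> along the ray \<open>x + z \<epsilon> lcw \<beta> v v\<close>, \<open>z \<ge> 0\<close>,
  against the density \<open>k(z) = q(z) exp (- \<integral>\<^sub>0\<^sup>z q)\<close> of the first jump time of a clock
  whose rate \<open>q = lcw \<beta> v * \<nu>\<close> is read off along the ray. By (B2), \<open>b \<le> q \<le> A\<close> with
  constants independent of \<open>x\<close>, \<open>v\<close> and \<open>\<epsilon>\<close>, so \<open>k\<close> is a probability density on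
  \<open>[0, \<infinity>)\<close> with \<open>k(z) \<le> A e\<^sup>-\<^sup>b\<^sup>z\<close>, and Jensen's inequality gives
  \<open>(chi - c)\<^sup>2 \<le> A \<integral> e\<^sup>-\<^sup>b\<^sup>z (\<phi>(t, x + z \<epsilon> lcw \<beta> v v) - c)\<^sup>2 dz\<close>.
  Integrating in \<open>(t, x, v)\<close> and using translation invariance in \<open>x\<close>, the choice \<open>c = 0\<close> gives
  the \<open>L\<^sup>2\<^sub>F\<close> bound with \<open>C\<^sup>2 = A / b\<close>. The choice \<open>c = \<phi>(t, x)\<close> bounds
  \<open>\<parallel>chi - \<phi>\<parallel>\<^sup>2\<close> by an average of the \<open>L\<^sup>2\<close> translation defect of \<open>\<phi>\<close> over
  the shifts \<open>z \<epsilon> lcw \<beta> v v\<close>; it is bounded and tends to \<open>0\<close> with the shift, so dominated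
  convergence in \<open>(z, v)\<close> finishes. Since the kernel does not depend on \<open>t\<close>, \<open>\<partial>\<^sub>t chi\<close>
  is the \<open>chi\<close> of \<open>\<partial>\<^sub>t \<phi>\<close>, so the statements for time derivatives are those for
  \<open>\<partial>\<^sub>t \<phi>\<close>.
\<close>

section \<open>Exponential first-jump densities\<close>

lemma nn_integral_exp_neg:
  fixes b :: real
  assumes "0 < b"
  shows "(\<integral>\<^sup>+ z. ennreal (indicator {0..} z * exp (- b * z)) \<partial>lborel) = ennreal (1 / b)"
proof (rule nn_integral_has_integral_lborel)
  have "((\<lambda>z. exp (- b * z)) has_integral 1 / b) {0..}"
    using has_integral_exp_minus_to_infinity[OF assms, of 0] by simp
  moreover have "(\<lambda>z. indicator {0..} z * exp (- b * z)) = (\<lambda>z. if z \<in> {0..} then exp (- b * z) else 0)"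
    by (auto simp: indicator_def)
  ultimately show "((\<lambda>z. indicator {0..} z * exp (- b * z)) has_integral 1 / b) UNIV"
    by (simp only: has_integral_restrict_UNIV)
qed auto

lemma set_integrable_exp_neg:
  fixes b :: real
  assumes "0 < b"
  shows "set_integrable lborel {0..} (\<lambda>z. exp (- b * z))"
  unfolding set_integrable_def
  by (rule integrableI_nonneg) (use nn_integral_exp_neg[OF assms] in auto)

definition exit_density :: "(real \<Rightarrow> real) \<Rightarrow> real \<Rightarrow> real" where
  "exit_density q z = q z * exp (- (LINT s:{0..z}|lborel. q s))"

context
  fixes q :: "real \<Rightarrow> real"
  assumes q_cont: "continuous_on UNIV q"
begin

lemma set_integral_rate_eq_integral: "(LINT s:{0..z}|lborel. q s) = integral {0..z} q"
  by (rule set_borel_integral_eq_integral(2))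
     (use borel_integrable_compact[OF compact_Icc continuous_on_subset[OF q_cont]]
      in \<open>auto simp: set_integrable_def\<close>)

lemma integral_rate_has_derivative:
  "0 \<le> z \<Longrightarrow> z \<le> r \<Longrightarrow> ((\<lambda>z. integral {0..z} q) has_real_derivative q z) (at z within {0..r})"
  by (intro integral_has_real_derivative continuous_on_subset[OF q_cont]) auto

lemma continuous_on_integral_rate: "continuous_on {0..} (\<lambda>z. integral {0..z} q)"
proof (clarsimp simp: continuous_on_eq_continuous_within)
  fix z :: real
  assume z: "0 \<le> z"
  have "at z within {0..} = at z within {0..z+1}"
    by (rule at_within_nhd[of _ "{..<z+1}"]) auto
  then show "continuous (at z within {0..}) (\<lambda>z. integral {0..z} q)"
    using DERIV_continuous[OF integral_rate_has_derivative[OF z, of "z+1"]] by simp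
qed

lemma exit_density_eq: "exit_density q z = q z * exp (- integral {0..z} q)"
  by (simp add: exit_density_def set_integral_rate_eq_integral)

lemma continuous_on_exit_density: "continuous_on {0..} (exit_density q)"
  unfolding exit_density_eq[abs_def]
  by (intro continuous_intros continuous_on_subset[OF q_cont] continuous_on_integral_rate) auto

lemma set_integral_exit_density_Icc:
  assumes "0 \<le> r"
  shows "(LINT z:{0..r}|lborel. exit_density q z) = 1 - exp (- integral {0..r} q)"
proof -
  have "set_integrable lborel {0..r} (exit_density q)"
    using borel_integrable_compact[OF compact_Icc continuous_on_subset[OF continuous_on_exit_density]]
    by (auto simp: set_integrable_def)
  then have "(LINT z:{0..r}|lborel. exit_density q z) = integral {0..r} (exit_density q)"
    by (rule set_borel_integral_eq_integral(2))
  also have "\<dots> = (- exp (- integral {0..r} q)) - (- exp (- integral {0..0} q))"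
  proof (rule integral_unique, rule fundamental_theorem_of_calculus)
    fix z
    assume "z \<in> {0..r}"
    then have "((\<lambda>z. - exp (- integral {0..z} q)) has_real_derivative exp (- integral {0..z} q) * q z)
        (at z within {0..r})"
      by (auto intro!: derivative_eq_intros integral_rate_has_derivative)
    then show "((\<lambda>z. - exp (- integral {0..z} q)) has_vector_derivative exit_density q z) (at z within {0..r})"
      by (simp add: has_real_derivative_iff_has_vector_derivative exit_density_eq mult.commute)
  qed (use assms in simp)
  finally show ?thesis by simp
qed

context
  fixes b A :: real
  assumes q_lower: "\<And>s. b \<le> q s" and q_upper: "\<And>s. q s \<le> A" and b_pos: "0 < b"
begin

lemma integral_rate_lower: "0 \<le> z \<Longrightarrow> b * z \<le> integral {0..z} q"
  using integral_le[of "\<lambda>_. b" "{0..z}" q]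
  by (auto simp: integrable_continuous_real continuous_on_subset[OF q_cont] q_lower mult.commute)

lemma exit_density_nonneg: "0 \<le> exit_density q z"
  using q_lower[of z] b_pos by (simp add: exit_density_def)

lemma exit_density_le_exp: "0 \<le> z \<Longrightarrow> exit_density q z \<le> A * exp (- b * z)"
  unfolding exit_density_eq
  using q_upper[of z] q_lower[of z] b_pos integral_rate_lower[of z]
  by (intro mult_mono) auto

lemma set_integrable_exit_density: "set_integrable lborel {0..} (exit_density q)"
proof -
  have "set_integrable lborel {0..} (\<lambda>z. A * exp (- b * z))"
    using set_integrable_exp_neg[OF b_pos] by (rule set_integrable_mult_right)
  moreover have "set_borel_measurable lborel {0..} (exit_density q)"
    unfolding set_borel_measurable_def
    using borel_measurable_continuous_on_indicator[OF _ continuous_on_exit_density] by simp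
  ultimately show ?thesis
    by (rule set_integrable_bound)
       (use exit_density_nonneg exit_density_le_exp q_lower[of 0] q_upper[of 0] b_pos
        in \<open>auto intro!: AE_I2\<close>)
qed

lemma set_integral_exit_density: "(LINT z:{0..}|lborel. exit_density q z) = 1"
proof (rule tendsto_unique[OF trivial_limit_at_top_linorder])
  show "((\<lambda>r. LINT z:{0..r}|lborel. exit_density q z) \<longlongrightarrow> (LINT z:{0..}|lborel. exit_density q z)) at_top"
    by (rule tendsto_set_lebesgue_integral_at_top) (auto intro: set_integrable_exit_density)
  have "filterlim (\<lambda>r. b * r) at_top at_top"
    using b_pos by (intro filterlim_tendsto_pos_mult_at_top tendsto_const filterlim_ident) auto
  then have "filterlim (\<lambda>r. integral {0..r} q) at_top at_top"
    by (rule filterlim_at_top_mono)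
       (use integral_rate_lower in \<open>auto simp: eventually_at_top_linorder intro: exI[of _ 0]\<close>)
  then have "((\<lambda>r. exp (- integral {0..r} q)) \<longlongrightarrow> 0) at_top"
    by (intro filterlim_compose[OF exp_at_bot] filterlim_compose[OF filterlim_uminus_at_bot_at_top])
  then have "((\<lambda>r. 1 - exp (- integral {0..r} q)) \<longlongrightarrow> 1) at_top"
    by (auto intro: tendsto_eq_intros)
  then show "((\<lambda>r. LINT z:{0..r}|lborel. exit_density q z) \<longlongrightarrow> 1) at_top"
    by (rule Lim_transform_eventually)
       (auto simp: set_integral_exit_density_Icc eventually_at_top_linorder intro: exI[of _ 0])
qed

end

end

section \<open>Averages against a probability density on the half-line\<close>

lemma difference_quotient_bound:
  fixes G G' :: "real \<Rightarrow> real"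
  assumes der: "\<And>s. (G has_real_derivative G' s) (at s)"
    and close: "\<And>s. \<bar>s - t\<bar> < d \<Longrightarrow> \<bar>G' s - G' t\<bar> \<le> e"
    and h: "h \<noteq> 0" "\<bar>h\<bar> < d"
  shows "\<bar>(G (t + h) - G t) / h - G' t\<bar> \<le> e"
proof -
  obtain \<xi> where "\<bar>\<xi> - t\<bar> < d" "(G (t + h) - G t) / h = G' \<xi>"
  proof (cases "h > 0")
    case True
    then obtain \<xi> where "t < \<xi>" "\<xi> < t + h" "G (t + h) - G t = h * G' \<xi>"
      using MVT2[of t "t + h" G G'] der by auto
    then show ?thesis using that[of \<xi>] h by auto
  next
    case False
    then obtain \<xi> where "t + h < \<xi>" "\<xi> < t" "G t - G (t + h) = - h * G' \<xi>"
      using MVT2[of "t + h" t G G'] der h by auto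
    then show ?thesis using that[of \<xi>] h by (auto simp: field_simps)
  qed
  then show ?thesis using close by simp
qed

context
  fixes k :: "real \<Rightarrow> real"
  assumes k_integrable: "set_integrable lborel {0..} k"
    and k_integral: "(LINT z:{0..}|lborel. k z) = 1"
    and k_nonneg: "\<And>z. 0 \<le> k z"
begin

lemma set_integrable_density_mult:
  assumes "h \<in> borel_measurable borel" and "\<And>z. 0 \<le> z \<Longrightarrow> \<bar>h z\<bar> \<le> M"
  shows "set_integrable lborel {0..} (\<lambda>z. k z * h z)"
proof (rule set_integrable_bound[OF set_integrable_mult_left[OF k_integrable, of M]])
  show "set_borel_measurable lborel {0..} (\<lambda>z. k z * h z)"
    using k_integrable assms(1)
    by (auto simp: set_borel_measurable_def set_integrable_def mult.assoc[symmetric]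
        dest: borel_measurable_integrable)
  show "AE z in lborel. z \<in> {0..} \<longrightarrow> norm (k z * h z) \<le> norm (k z * M)"
    using k_nonneg assms(2)
    by (intro AE_I2) (auto simp: abs_mult intro!: mult_left_mono order.trans[OF assms(2) abs_ge_self])
qed

lemma abs_set_integral_density_le:
  assumes "h \<in> borel_measurable borel" and "\<And>z. 0 \<le> z \<Longrightarrow> \<bar>h z\<bar> \<le> M"
  shows "\<bar>LINT z:{0..}|lborel. k z * h z\<bar> \<le> M"
proof -
  have kh: "set_integrable lborel {0..} (\<lambda>z. k z * h z)"
    by (rule set_integrable_density_mult[OF assms])
  have "(LINT z:{0..}|lborel. k z * h z) \<le> (LINT z:{0..}|lborel. k z * M)"
    using assms(2) k_nonneg
    by (intro set_integral_mono[OF kh set_integrable_mult_left[OF k_integrable]])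
       (auto intro!: mult_left_mono dest: abs_le_D1)
  moreover have "(LINT z:{0..}|lborel. k z * (- M)) \<le> (LINT z:{0..}|lborel. k z * h z)"
  proof (intro set_integral_mono[OF set_integrable_mult_left[OF k_integrable] kh])
    fix z :: real
    assume "z \<in> {0..}"
    then show "k z * (- M) \<le> k z * h z"
      using assms(2)[of z] k_nonneg[of z] by (intro mult_left_mono) auto
  qed
  ultimately show ?thesis
    using k_integral set_integral_uminus[OF set_integrable_mult_left[OF k_integrable, of M]]
    by (simp add: set_integral_mult_left)
qed

lemma set_integral_density_diff_const:
  assumes "h \<in> borel_measurable borel" and "\<And>z. 0 \<le> z \<Longrightarrow> \<bar>h z\<bar> \<le> M"
  shows "(LINT z:{0..}|lborel. k z * (h z - c)) = (LINT z:{0..}|lborel. k z * h z) - c"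
  using set_integrable_density_mult[OF assms] k_integrable k_integral
  by (simp add: right_diff_distrib set_integral_diff set_integral_mult_left)

lemma set_integrable_density_mult_square:
  assumes "h \<in> borel_measurable borel" and "\<And>z. 0 \<le> z \<Longrightarrow> \<bar>h z\<bar> \<le> M"
  shows "set_integrable lborel {0..} (\<lambda>z. k z * (h z)^2)"
proof (rule set_integrable_density_mult)
  show "\<bar>(h z)^2\<bar> \<le> M^2" if "0 \<le> z" for z
    using power_mono[OF assms(2)[OF that] abs_ge_zero, of 2] by simp
qed (use assms(1) in measurable)

text \<open>Jensen's inequality, via the nonnegative variance \<open>\<integral> k (h - m)\<^sup>2\<close>.\<close>
lemma set_integral_density_square_le:
  assumes hm: "h \<in> borel_measurable borel" and hM: "\<And>z. 0 \<le> z \<Longrightarrow> \<bar>h z\<bar> \<le> M"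
  shows "(LINT z:{0..}|lborel. k z * h z)^2 \<le> (LINT z:{0..}|lborel. k z * (h z)^2)"
proof -
  define m where "m = (LINT z:{0..}|lborel. k z * h z)"
  have kh: "set_integrable lborel {0..} (\<lambda>z. k z * h z)"
    by (rule set_integrable_density_mult[OF hm hM])
  have kh2: "set_integrable lborel {0..} (\<lambda>z. k z * (h z)^2)"
    by (rule set_integrable_density_mult_square[OF hm hM])
  have "0 \<le> (LINT z:{0..}|lborel. k z * (h z - m)^2)"
    unfolding set_lebesgue_integral_def
    using k_nonneg by (intro integral_nonneg_AE AE_I2) (auto simp: indicator_def)
  also have "\<dots> = (LINT z:{0..}|lborel. k z * (h z)^2 - 2 * m * (k z * h z) + m^2 * k z)"
    by (intro set_lebesgue_integral_cong) (auto simp: algebra_simps power2_eq_square)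
  also have "\<dots> = (LINT z:{0..}|lborel. k z * (h z)^2) - m^2"
    using kh kh2 k_integrable k_integral
    by (simp add: set_integral_add set_integral_diff set_integral_mult_right m_def[symmetric]
        power2_eq_square)
  finally show ?thesis by (simp add: m_def)
qed

lemma nn_set_integral_density_square_le:
  assumes hm: "h \<in> borel_measurable borel" and hM: "\<And>z. 0 \<le> z \<Longrightarrow> \<bar>h z\<bar> \<le> M"
    and k_le: "\<And>z. 0 \<le> z \<Longrightarrow> k z \<le> A * exp (- b * z)"
  shows "ennreal ((LINT z:{0..}|lborel. k z * h z)^2)
    \<le> ennreal A * (\<integral>\<^sup>+ z. ennreal (indicator {0..} z * (exp (- b * z) * (h z)^2)) \<partial>lborel)"
proof -
  have A0: "0 \<le> A"
    using k_nonneg[of 0] k_le[of 0] by simp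
  have "(LINT z:{0..}|lborel. k z * h z)^2 \<le> (LINT z:{0..}|lborel. k z * (h z)^2)"
    by (rule set_integral_density_square_le[OF hm hM])
  also have "ennreal (LINT z:{0..}|lborel. k z * (h z)^2)
      = (\<integral>\<^sup>+ z. ennreal (indicator {0..} z * (k z * (h z)^2)) \<partial>lborel)"
    using set_integrable_density_mult_square[OF hm hM]
    unfolding set_lebesgue_integral_def set_integrable_def
    by (subst nn_integral_eq_integral) (auto simp: k_nonneg indicator_def)
  also have "\<dots> \<le> (\<integral>\<^sup>+ z. ennreal A * ennreal (indicator {0..} z * (exp (- b * z) * (h z)^2)) \<partial>lborel)"
  proof (intro nn_integral_mono)
    fix z :: real
    have "0 \<le> z \<Longrightarrow> k z * (h z)^2 \<le> A * (exp (- b * z) * (h z)^2)"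
      using k_le[of z] by (simp add: mult.assoc[symmetric] mult_right_mono)
    then show "ennreal (indicator {0..} z * (k z * (h z)^2))
        \<le> ennreal A * ennreal (indicator {0..} z * (exp (- b * z) * (h z)^2))"
      using A0 by (auto simp: ennreal_mult[symmetric] indicator_def)
  qed
  also have "\<dots> = ennreal A * (\<integral>\<^sup>+ z. ennreal (indicator {0..} z * (exp (- b * z) * (h z)^2)) \<partial>lborel)"
    using hm by (intro nn_integral_cmult) measurable
  finally show ?thesis
    by (simp add: ennreal_leI order_trans)
qed

lemma has_real_derivative_set_integral_density:
  fixes g gd :: "real \<Rightarrow> real \<Rightarrow> real"
  assumes meas: "\<And>s. g s \<in> borel_measurable borel" "\<And>s. gd s \<in> borel_measurable borel"
    and gM: "\<And>s z. 0 \<le> z \<Longrightarrow> \<bar>g s z\<bar> \<le> M" and gdM: "\<And>s z. 0 \<le> z \<Longrightarrow> \<bar>gd s z\<bar> \<le> M'"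
    and deriv: "\<And>s z. ((\<lambda>s. g s z) has_real_derivative gd s z) (at s)"
    and gd_close: "\<And>e. 0 < e \<Longrightarrow> \<exists>d>0. \<forall>s z. \<bar>s - t\<bar> < d \<longrightarrow> \<bar>gd s z - gd t z\<bar> \<le> e"
  shows "((\<lambda>s. LINT z:{0..}|lborel. k z * g s z) has_real_derivative (LINT z:{0..}|lborel. k z * gd t z)) (at t)"
  unfolding DERIV_def
proof (rule LIM_I)
  fix r :: real
  assume "0 < r"
  then obtain d where d: "0 < d" "\<And>s z. \<bar>s - t\<bar> < d \<Longrightarrow> \<bar>gd s z - gd t z\<bar> \<le> r / 2"
    using gd_close[of "r / 2"] by auto
  have "\<bar>((LINT z:{0..}|lborel. k z * g (t + h) z) - (LINT z:{0..}|lborel. k z * g t z)) / h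
      - (LINT z:{0..}|lborel. k z * gd t z)\<bar> \<le> r / 2" if h: "h \<noteq> 0" "\<bar>h\<bar> < d" for h
  proof -
    define D where "D z = (g (t + h) z - g t z) / h - gd t z" for z
    have Dm: "D \<in> borel_measurable borel"
      unfolding D_def using meas by measurable
    have D_le: "0 \<le> z \<Longrightarrow> \<bar>D z\<bar> \<le> r / 2" for z
      unfolding D_def using deriv d(2) h by (intro difference_quotient_bound) auto
    have "k z * g (t + h) z = k z * g t z + (h * (k z * gd t z) + h * (k z * D z))" for z
      unfolding D_def using h by (simp add: field_simps)
    then have "(LINT z:{0..}|lborel. k z * g (t + h) z)
        = (LINT z:{0..}|lborel. k z * g t z) + h * (LINT z:{0..}|lborel. k z * gd t z)
          + h * (LINT z:{0..}|lborel. k z * D z)"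
      using set_integrable_density_mult[OF meas(1) gM] set_integrable_density_mult[OF meas(2) gdM]
        set_integrable_density_mult[OF Dm D_le]
      by (simp add: set_integral_add set_integral_mult_right)
    then show ?thesis
      using abs_set_integral_density_le[OF Dm D_le] h by (simp add: field_simps)
  qed
  then show "\<exists>d>0. \<forall>h. h \<noteq> 0 \<and> norm (h - 0) < d \<longrightarrow> norm (((LINT z:{0..}|lborel. k z * g (t + h) z)
      - (LINT z:{0..}|lborel. k z * g t z)) / h - (LINT z:{0..}|lborel. k z * gd t z)) < r"
    using d(1) \<open>0 < r\<close> by (intro exI[of _ d]) force
qed

end

section \<open>Translations in the space variable\<close>

lemma nn_integral_lborel_translate:
  fixes u :: "'a::euclidean_space \<Rightarrow> ennreal"
  assumes [measurable]: "u \<in> borel_measurable borel"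
  shows "(\<integral>\<^sup>+x. u (x + y) \<partial>lborel) = (\<integral>\<^sup>+x. u x \<partial>lborel)"
proof -
  have "(\<integral>\<^sup>+x. u x \<partial>lborel) = (\<integral>\<^sup>+x. u x \<partial>(distr lborel borel ((+) y)))"
    by (simp add: lborel_distr_plus)
  also have "\<dots> = (\<integral>\<^sup>+x. u (y + x) \<partial>lborel)"
    by (subst nn_integral_distr) auto
  finally show ?thesis by (simp add: add.commute)
qed

lemma nn_integral_lborel_pair_iterated:
  fixes h :: "real \<times> 'a::euclidean_space \<Rightarrow> ennreal"
  assumes [measurable]: "h \<in> borel_measurable (borel \<Otimes>\<^sub>M borel)"
  shows "(\<integral>\<^sup>+p. h p \<partial>(lborel :: (real \<times> 'a) measure)) = (\<integral>\<^sup>+x. \<integral>\<^sup>+t. h (t, x) \<partial>lborel \<partial>lborel)"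
proof -
  have lborel_eq: "(lborel :: (real \<times> 'a) measure) = lborel \<Otimes>\<^sub>M lborel"
    by (simp add: lborel_prod)
  show ?thesis
    unfolding lborel_eq by (subst lborel_pair.nn_integral_snd[symmetric]) simp_all
qed

lemma nn_integral_lborel_triple_iterated:
  fixes h :: "real \<times> 'a::euclidean_space \<times> 'a \<Rightarrow> ennreal"
  assumes [measurable]: "h \<in> borel_measurable (borel \<Otimes>\<^sub>M borel \<Otimes>\<^sub>M borel)"
  shows "(\<integral>\<^sup>+p. h p \<partial>(lborel :: (real \<times> 'a \<times> 'a) measure))
    = (\<integral>\<^sup>+v. \<integral>\<^sup>+x. \<integral>\<^sup>+t. h (t, x, v) \<partial>lborel \<partial>lborel \<partial>lborel)"
proof -
  interpret P: pair_sigma_finite "lborel :: real measure" "lborel \<Otimes>\<^sub>M lborel :: ('a \<times> 'a) measure"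
    unfolding pair_sigma_finite_def by (simp add: lborel_prod lborel.sigma_finite_measure_axioms)
  have lborel_eq: "(lborel :: (real \<times> 'a \<times> 'a) measure) = lborel \<Otimes>\<^sub>M (lborel \<Otimes>\<^sub>M lborel)"
    by (simp add: lborel_prod)
  have "(\<integral>\<^sup>+p. h p \<partial>(lborel :: (real \<times> 'a \<times> 'a) measure))
      = (\<integral>\<^sup>+q. \<integral>\<^sup>+t. h (t, q) \<partial>lborel \<partial>(lborel \<Otimes>\<^sub>M lborel))"
    unfolding lborel_eq by (subst P.nn_integral_snd[symmetric]) simp_all
  also have "\<dots> = (\<integral>\<^sup>+v. \<integral>\<^sup>+x. \<integral>\<^sup>+t. h (t, x, v) \<partial>lborel \<partial>lborel \<partial>lborel)"
    by (subst lborel_pair.nn_integral_snd[symmetric]) simp_all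
  finally show ?thesis .
qed

lemma L2_sq_iterated:
  fixes g :: "real \<times> 'a::euclidean_space \<Rightarrow> real"
  assumes [measurable]: "g \<in> borel_measurable (borel \<Otimes>\<^sub>M borel)"
  shows "L2_sq (\<lambda>t x. g (t, x)) = (\<integral>\<^sup>+x. \<integral>\<^sup>+t. indicator {0<..} t * ennreal ((g (t, x))^2) \<partial>lborel \<partial>lborel)"
  unfolding L2_sq_def by (subst nn_integral_lborel_pair_iterated) simp_all

lemma L2_sq_translate:
  fixes g :: "real \<times> 'a::euclidean_space \<Rightarrow> real"
  assumes [measurable]: "g \<in> borel_measurable (borel \<Otimes>\<^sub>M borel)" and "0 \<le> A"
  shows "(\<integral>\<^sup>+x. \<integral>\<^sup>+t. indicator {0<..} t * ennreal (A * (g (t, x + y))^2) \<partial>lborel \<partial>lborel)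
    = ennreal A * L2_sq (\<lambda>t x. g (t, x))"
proof -
  define u where "u x = (\<integral>\<^sup>+t. indicator {0<..} t * ennreal ((g (t, x))^2) \<partial>lborel)" for x
  have [measurable]: "u \<in> borel_measurable borel"
    unfolding u_def[abs_def] by measurable
  have "(\<integral>\<^sup>+x. \<integral>\<^sup>+t. indicator {0<..} t * ennreal (A * (g (t, x + y))^2) \<partial>lborel \<partial>lborel)
      = (\<integral>\<^sup>+x. ennreal A * u (x + y) \<partial>lborel)"
    unfolding u_def
    by (intro nn_integral_cong, subst nn_integral_cmult[symmetric])
       (measurable, auto simp: assms(2) ennreal_mult mult_ac intro!: nn_integral_cong)
  also have "\<dots> = ennreal A * (\<integral>\<^sup>+x. u x \<partial>lborel)"
    by (simp add: nn_integral_cmult nn_integral_lborel_translate)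
  finally show ?thesis
    by (simp add: L2_sq_iterated u_def)
qed

lemma bounded_vanishing_outside_ball:
  fixes g :: "'b::euclidean_space \<Rightarrow> real"
  assumes "continuous_on UNIV g" and "\<And>p. R < norm p \<Longrightarrow> g p = 0"
  obtains M where "\<And>p. \<bar>g p\<bar> \<le> M"
proof -
  have "compact (g ` cball 0 \<bar>R\<bar>)"
    by (intro compact_continuous_image continuous_on_subset[OF assms(1)]) auto
  then obtain M where "\<And>y. y \<in> g ` cball 0 \<bar>R\<bar> \<Longrightarrow> norm y \<le> M"
    using compact_imp_bounded bounded_iff by metis
  then have "\<bar>g p\<bar> \<le> \<bar>M\<bar>" for p
    using assms(2)[of p] by (cases "norm p \<le> \<bar>R\<bar>") force+
  then show ?thesis by (rule that)
qed

lemma uniformly_continuous_vanishing_outside_ball: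
  fixes g :: "'b::euclidean_space \<Rightarrow> real"
  assumes gc: "continuous_on UNIV g" and gR: "\<And>p. R < norm p \<Longrightarrow> g p = 0"
  shows "uniformly_continuous_on UNIV g"
  unfolding uniformly_continuous_on_def
proof (intro allI impI)
  fix e :: real
  assume e: "0 < e"
  define K where "K = cball (0::'b) (\<bar>R\<bar> + 1)"
  have "uniformly_continuous_on K g"
    unfolding K_def by (intro compact_uniformly_continuous continuous_on_subset[OF gc]) auto
  then obtain d where d: "d > 0" "\<And>p q. p \<in> K \<Longrightarrow> q \<in> K \<Longrightarrow> dist q p < d \<Longrightarrow> dist (g q) (g p) < e"
    unfolding uniformly_continuous_on_def using e by metis
  show "\<exists>d>0. \<forall>p\<in>UNIV. \<forall>q\<in>UNIV. dist q p < d \<longrightarrow> dist (g q) (g p) < e"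
  proof (intro exI[of _ "min d 1"] conjI ballI impI)
    fix p q :: 'b
    assume pq: "dist q p < min d 1"
    show "dist (g q) (g p) < e"
    proof (cases "norm p \<le> \<bar>R\<bar> \<or> norm q \<le> \<bar>R\<bar>")
      case True
      have "norm p \<le> norm q + dist q p" "norm q \<le> norm p + dist q p"
        using norm_triangle_ineq2[of p q] norm_triangle_ineq2[of q p]
        by (auto simp: dist_norm norm_minus_commute)
      then have "p \<in> K" "q \<in> K"
        using True pq by (auto simp: K_def)
      then show ?thesis using d(2) pq by simp
    next
      case False
      then have "R < norm p" "R < norm q" by auto
      then show ?thesis using gR e by simp
    qed
  qed (use d in auto)
qed

lemma L2_sq_finite:
  fixes g :: "real \<times> 'a::euclidean_space \<Rightarrow> real"
  assumes "continuous_on UNIV g" and gR: "\<And>p. R < norm p \<Longrightarrow> g p = 0"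
  shows "L2_sq (\<lambda>t x. g (t, x)) < \<infinity>"
proof -
  obtain M where gM: "\<And>p. \<bar>g p\<bar> \<le> M"
    using bounded_vanishing_outside_ball[OF assms] by blast
  have "L2_sq (\<lambda>t x. g (t, x)) \<le> (\<integral>\<^sup>+p. ennreal (M^2) * indicator (cball (0::real \<times> 'a) \<bar>R\<bar>) p \<partial>lborel)"
    unfolding L2_sq_def
  proof (intro nn_integral_mono)
    fix p :: "real \<times> 'a"
    have "(g p)^2 \<le> M^2"
      using power_mono[OF gM[of p] abs_ge_zero, of 2] by simp
    then show "indicator {0<..} (fst p) * ennreal ((g (fst p, snd p))^2) \<le> ennreal (M^2) * indicator (cball 0 \<bar>R\<bar>) p"
      using gR[of p] by (cases "norm p \<le> \<bar>R\<bar>") (auto simp: indicator_def ennreal_leI)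
  qed
  also have "\<dots> = ennreal (M^2) * emeasure lborel (cball (0 :: real \<times> 'a) \<bar>R\<bar>)"
    by (subst nn_integral_cmult_indicator) auto
  also have "\<dots> < \<infinity>"
    using emeasure_bounded_finite[of "cball (0 :: real \<times> 'a) \<bar>R\<bar>"] by (simp add: ennreal_mult_less_top)
  finally show ?thesis .
qed

definition translation_defect :: "(real \<times> 'a::euclidean_space \<Rightarrow> real) \<Rightarrow> 'a \<Rightarrow> ennreal" where
  "translation_defect g y =
    (\<integral>\<^sup>+x. \<integral>\<^sup>+t. indicator {0<..} t * ennreal ((g (t, x + y) - g (t, x))^2) \<partial>lborel \<partial>lborel)"

lemma translation_defect_measurable[measurable]:
  assumes [measurable]: "g \<in> borel_measurable (borel \<Otimes>\<^sub>M borel)"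
  shows "translation_defect g \<in> borel_measurable borel"
  unfolding translation_defect_def[abs_def] by measurable

lemma translation_defect_cmult:
  fixes g :: "real \<times> 'a::euclidean_space \<Rightarrow> real"
  assumes [measurable]: "g \<in> borel_measurable (borel \<Otimes>\<^sub>M borel)" and "0 \<le> A"
  shows "(\<integral>\<^sup>+x. \<integral>\<^sup>+t. indicator {0<..} t * ennreal (A * (g (t, x + y) - g (t, x))^2) \<partial>lborel \<partial>lborel)
    = ennreal A * translation_defect g y"
  unfolding translation_defect_def
  by (subst nn_integral_cmult[symmetric], measurable, intro nn_integral_cong,
      subst nn_integral_cmult[symmetric])
     (measurable, auto simp: assms(2) ennreal_mult mult_ac intro!: nn_integral_cong)

lemma translation_defect_le:
  fixes g :: "real \<times> 'a::euclidean_space \<Rightarrow> real"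
  assumes gm[measurable]: "g \<in> borel_measurable (borel \<Otimes>\<^sub>M borel)"
  shows "translation_defect g y \<le> 4 * L2_sq (\<lambda>t x. g (t, x))"
proof -
  define u where "u x = (\<integral>\<^sup>+t. indicator {0<..} t * ennreal (2 * (g (t, x))^2) \<partial>lborel)" for x
  have um[measurable]: "u \<in> borel_measurable borel"
    unfolding u_def[abs_def] by measurable
  have pw: "indicator {0<..} t * ennreal ((g (t, x + y) - g (t, x))^2)
      \<le> indicator {0<..} t * ennreal (2 * (g (t, x + y))^2) + indicator {0<..} t * ennreal (2 * (g (t, x))^2)"
    for t x
  proof -
    have "(g (t, x + y) - g (t, x))^2 \<le> 2 * (g (t, x + y))^2 + 2 * (g (t, x))^2"
      using zero_le_power2[of "g (t, x + y) + g (t, x)"] by (simp add: power2_eq_square algebra_simps)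
    then show ?thesis
      by (cases "0 < t") (auto simp: ennreal_plus[symmetric] simp del: ennreal_plus intro!: ennreal_leI)
  qed
  have "translation_defect g y
      \<le> (\<integral>\<^sup>+x. \<integral>\<^sup>+t. indicator {0<..} t * ennreal (2 * (g (t, x + y))^2)
          + indicator {0<..} t * ennreal (2 * (g (t, x))^2) \<partial>lborel \<partial>lborel)"
    unfolding translation_defect_def by (intro nn_integral_mono pw)
  also have "\<dots> = (\<integral>\<^sup>+x. u (x + y) \<partial>lborel) + (\<integral>\<^sup>+x. u x \<partial>lborel)"
    unfolding u_def by (subst nn_integral_add[symmetric]; (intro nn_integral_cong nn_integral_add)?) measurable
  also have "\<dots> = 2 * (\<integral>\<^sup>+x. u x \<partial>lborel)"
    by (simp add: nn_integral_lborel_translate mult_2)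
  also have "(\<integral>\<^sup>+x. u x \<partial>lborel) = 2 * L2_sq (\<lambda>t x. g (t, x))"
    using L2_sq_translate[OF gm, of 2 0] unfolding u_def by (simp add: mult_ac)
  finally show ?thesis
    by (simp add: mult.assoc[symmetric])
qed

lemma translation_defect_le_uniform:
  fixes g :: "real \<times> 'a::euclidean_space \<Rightarrow> real"
  assumes [measurable]: "g \<in> borel_measurable (borel \<Otimes>\<^sub>M borel)"
    and gR: "\<And>p. R < norm p \<Longrightarrow> g p = 0"
    and close: "\<And>t x. \<bar>g (t, x + y) - g (t, x)\<bar> \<le> e" and y: "norm y \<le> 1"
  shows "translation_defect g y \<le> ennreal (e^2) * emeasure lborel (cball (0 :: real \<times> 'a) (\<bar>R\<bar> + 1))"
proof -
  define K where "K = cball (0 :: real \<times> 'a) (\<bar>R\<bar> + 1)"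
  have [measurable]: "K \<in> sets (borel \<Otimes>\<^sub>M borel)"
    unfolding K_def borel_prod by simp
  have pw: "indicator {0<..} t * ennreal ((g (t, x + y) - g (t, x))^2) \<le> ennreal (e^2) * indicator K (t, x)"
    for t x
  proof (cases "(t, x) \<in> K")
    case True
    have "(g (t, x + y) - g (t, x))^2 \<le> e^2"
      using close[of t x] by (metis abs_ge_zero power2_abs power_mono)
    then show ?thesis using True by (auto simp: indicator_def intro!: ennreal_leI)
  next
    case False
    then have "\<bar>R\<bar> + 1 < norm (t, x)" by (simp add: K_def)
    moreover have "norm (t, x) \<le> norm (t, x + y) + norm y"
      using norm_triangle_ineq[of "(t, x + y)" "(0, - y)"] by (simp add: norm_Pair)
    ultimately have "R < norm (t, x + y)" "R < norm (t, x)"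
      using y by auto
    then show ?thesis using gR by simp
  qed
  have "translation_defect g y \<le> (\<integral>\<^sup>+x. \<integral>\<^sup>+t. ennreal (e^2) * indicator K (t, x) \<partial>lborel \<partial>lborel)"
    unfolding translation_defect_def by (intro nn_integral_mono pw)
  also have "\<dots> = (\<integral>\<^sup>+p. ennreal (e^2) * indicator K p \<partial>lborel)"
    by (rule nn_integral_lborel_pair_iterated[symmetric]) measurable
  also have "\<dots> = ennreal (e^2) * emeasure lborel K"
    by (rule nn_integral_cmult_indicator) (simp add: K_def)
  finally show ?thesis by (simp add: K_def)
qed

lemma translation_defect_tendsto_0:
  fixes g :: "real \<times> 'a::euclidean_space \<Rightarrow> real"
  assumes gc: "continuous_on UNIV g" and gR: "\<And>p. R < norm p \<Longrightarrow> g p = 0"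
  shows "(translation_defect g \<longlongrightarrow> 0) (nhds 0)"
proof (rule order_tendstoI)
  fix a :: ennreal
  assume a: "0 < a"
  have [measurable]: "g \<in> borel_measurable (borel \<Otimes>\<^sub>M borel)"
    using borel_measurable_continuous_onI[OF gc] by (simp add: borel_prod)
  define \<mu> where "\<mu> = emeasure lborel (cball (0 :: real \<times> 'a) (\<bar>R\<bar> + 1))"
  have "\<mu> < \<infinity>"
    unfolding \<mu>_def by (rule emeasure_bounded_finite) simp
  then have "((\<lambda>e. ennreal (e^2) * \<mu>) \<longlongrightarrow> ennreal (0^2) * \<mu>) (at_right 0)"
    by (intro tendsto_intros ennreal_tendsto_cmult) (auto simp: ennreal_mult_eq_top_iff)
  then have "\<forall>\<^sub>F e in at_right 0. ennreal (e^2) * \<mu> < a"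
    using a by (auto dest: order_tendstoD)
  then obtain c where "0 < c" "\<And>e. 0 < e \<Longrightarrow> e < c \<Longrightarrow> ennreal (e^2) * \<mu> < a"
    by (auto simp: eventually_at_right_field)
  then obtain e where e: "0 < e" "ennreal (e^2) * \<mu> < a"
    using field_lbound_gt_zero[of c c] by auto
  have "uniformly_continuous_on UNIV g"
    by (rule uniformly_continuous_vanishing_outside_ball[of g R]) (use gc gR in auto)
  then obtain d where d: "0 < d" "\<And>p q. dist p q < d \<Longrightarrow> dist (g p) (g q) < e"
    using e(1) unfolding uniformly_continuous_on_def by (metis UNIV_I)
  have "translation_defect g y < a" if y: "norm y < min d 1" for y :: 'a
  proof -
    have "\<bar>g (t, x + y) - g (t, x)\<bar> \<le> e" for t x
      using d(2)[of "(t, x + y)" "(t, x)"] y by (simp add: dist_Pair_Pair dist_norm dist_real_def)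
    then have "translation_defect g y \<le> ennreal (e^2) * \<mu>"
      unfolding \<mu>_def using y by (intro translation_defect_le_uniform gR) auto
    then show ?thesis using e(2) by simp
  qed
  then show "\<forall>\<^sub>F y in nhds 0. translation_defect g y < a"
    unfolding eventually_nhds_metric using d(1) by (intro exI[of _ "min d 1"]) (auto simp: dist_norm)
qed simp

section \<open>Ray averages in the kinetic norm\<close>

lemma nn_integral_exp_weighted_swap:
  fixes E :: "real \<times> 'a::euclidean_space \<times> 'a \<Rightarrow> real"
  assumes [measurable]: "E \<in> borel_measurable (borel \<Otimes>\<^sub>M borel \<Otimes>\<^sub>M borel)"
  shows "(\<integral>\<^sup>+x. \<integral>\<^sup>+t. \<integral>\<^sup>+z. ennreal (indicator {0..} z * exp (- b * z)) *
        (indicator {0<..} t * ennreal (E (t, x, z *\<^sub>R w))) \<partial>lborel \<partial>lborel \<partial>lborel)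
    = (\<integral>\<^sup>+z. ennreal (indicator {0..} z * exp (- b * z)) *
        (\<integral>\<^sup>+x. \<integral>\<^sup>+t. indicator {0<..} t * ennreal (E (t, x, z *\<^sub>R w)) \<partial>lborel \<partial>lborel) \<partial>lborel)"
    (is "(\<integral>\<^sup>+x. \<integral>\<^sup>+t. \<integral>\<^sup>+z. ?G t x z \<partial>lborel \<partial>lborel \<partial>lborel) = _")
proof -
  have "(\<integral>\<^sup>+x. \<integral>\<^sup>+t. \<integral>\<^sup>+z. ?G t x z \<partial>lborel \<partial>lborel \<partial>lborel)
      = (\<integral>\<^sup>+x. \<integral>\<^sup>+z. \<integral>\<^sup>+t. ?G t x z \<partial>lborel \<partial>lborel \<partial>lborel)"
    by (intro nn_integral_cong lborel_pair.Fubini') measurable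
  also have "\<dots> = (\<integral>\<^sup>+z. \<integral>\<^sup>+x. \<integral>\<^sup>+t. ?G t x z \<partial>lborel \<partial>lborel \<partial>lborel)"
    by (intro lborel_pair.Fubini') measurable
  also have "\<dots> = (\<integral>\<^sup>+z. ennreal (indicator {0..} z * exp (- b * z)) *
      (\<integral>\<^sup>+x. \<integral>\<^sup>+t. indicator {0<..} t * ennreal (E (t, x, z *\<^sub>R w)) \<partial>lborel \<partial>lborel) \<partial>lborel)"
    by (intro nn_integral_cong, subst nn_integral_cmult[symmetric], measurable,
        intro nn_integral_cong nn_integral_cmult) measurable
  finally show ?thesis .
qed

lemma L2F_sq_le_ray_average:
  fixes F :: "'a::euclidean_space \<Rightarrow> real" and f :: "real \<Rightarrow> 'a \<Rightarrow> 'a \<Rightarrow> real"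
    and E :: "real \<times> 'a \<times> 'a \<Rightarrow> real" and W :: "'a \<Rightarrow> 'a"
  assumes [measurable]: "F \<in> borel_measurable borel" "W \<in> borel_measurable borel"
    and E_measurable[measurable]: "E \<in> borel_measurable (borel \<Otimes>\<^sub>M borel \<Otimes>\<^sub>M borel)"
    and E_nonneg: "\<And>p. 0 \<le> E p" and F_nonneg: "\<And>v. 0 \<le> F v"
    and f_le: "\<And>t x v. 0 < t \<Longrightarrow> ennreal ((f t x v)^2)
      \<le> (\<integral>\<^sup>+z. ennreal (indicator {0..} z * (exp (- b * z) * E (t, x, z *\<^sub>R W v))) \<partial>lborel)"
  shows "L2F_sq F f \<le> (\<integral>\<^sup>+v. ennreal (F v) * (\<integral>\<^sup>+z. ennreal (indicator {0..} z * exp (- b * z)) *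
      (\<integral>\<^sup>+x. \<integral>\<^sup>+t. indicator {0<..} t * ennreal (E (t, x, z *\<^sub>R W v)) \<partial>lborel \<partial>lborel) \<partial>lborel) \<partial>lborel)"
proof -
  define G where "G t x v z = ennreal (indicator {0..} z * exp (- b * z)) *
      (indicator {0<..} t * ennreal (E (t, x, z *\<^sub>R W v)))" for t x v z
  have "indicator {0<..} t * ennreal (F v * (f t x v)^2) \<le> ennreal (F v) * (\<integral>\<^sup>+z. G t x v z \<partial>lborel)"
    for t x v
  proof (cases "0 < t")
    case True
    have "(\<integral>\<^sup>+z. G t x v z \<partial>lborel)
        = (\<integral>\<^sup>+z. ennreal (indicator {0..} z * (exp (- b * z) * E (t, x, z *\<^sub>R W v))) \<partial>lborel)"
      using True E_nonneg by (intro nn_integral_cong) (simp add: G_def ennreal_mult[symmetric] mult_ac)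
    then show ?thesis
      using True f_le[OF True] F_nonneg by (simp add: ennreal_mult mult_left_mono)
  qed simp
  then have "L2F_sq F f \<le> (\<integral>\<^sup>+p. ennreal (F (snd (snd p))) *
      (\<integral>\<^sup>+z. G (fst p) (fst (snd p)) (snd (snd p)) z \<partial>lborel) \<partial>lborel)"
    unfolding L2F_sq_def by (intro nn_integral_mono) auto
  also have "\<dots> = (\<integral>\<^sup>+v. \<integral>\<^sup>+x. \<integral>\<^sup>+t. ennreal (F v) * (\<integral>\<^sup>+z. G t x v z \<partial>lborel) \<partial>lborel \<partial>lborel \<partial>lborel)"
  proof -
    have "(\<lambda>p. ennreal (F (snd (snd p))) * (\<integral>\<^sup>+z. G (fst p) (fst (snd p)) (snd (snd p)) z \<partial>lborel))
        \<in> borel_measurable (borel \<Otimes>\<^sub>M borel \<Otimes>\<^sub>M borel)"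
      unfolding G_def by measurable
    from nn_integral_lborel_triple_iterated[OF this] show ?thesis by simp
  qed
  also have "\<dots> = (\<integral>\<^sup>+v. ennreal (F v) * (\<integral>\<^sup>+x. \<integral>\<^sup>+t. \<integral>\<^sup>+z. G t x v z \<partial>lborel \<partial>lborel \<partial>lborel) \<partial>lborel)"
  proof (intro nn_integral_cong)
    fix v :: 'a
    have "(\<integral>\<^sup>+x. \<integral>\<^sup>+t. ennreal (F v) * (\<integral>\<^sup>+z. G t x v z \<partial>lborel) \<partial>lborel \<partial>lborel)
        = (\<integral>\<^sup>+x. ennreal (F v) * (\<integral>\<^sup>+t. \<integral>\<^sup>+z. G t x v z \<partial>lborel \<partial>lborel) \<partial>lborel)"
      by (intro nn_integral_cong nn_integral_cmult) (unfold G_def, measurable)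
    also have "\<dots> = ennreal (F v) * (\<integral>\<^sup>+x. \<integral>\<^sup>+t. \<integral>\<^sup>+z. G t x v z \<partial>lborel \<partial>lborel \<partial>lborel)"
      by (intro nn_integral_cmult) (unfold G_def, measurable)
    finally show "(\<integral>\<^sup>+x. \<integral>\<^sup>+t. ennreal (F v) * (\<integral>\<^sup>+z. G t x v z \<partial>lborel) \<partial>lborel \<partial>lborel)
        = ennreal (F v) * (\<integral>\<^sup>+x. \<integral>\<^sup>+t. \<integral>\<^sup>+z. G t x v z \<partial>lborel \<partial>lborel \<partial>lborel)" .
  qed
  also have "\<dots> = (\<integral>\<^sup>+v. ennreal (F v) * (\<integral>\<^sup>+z. ennreal (indicator {0..} z * exp (- b * z)) *
      (\<integral>\<^sup>+x. \<integral>\<^sup>+t. indicator {0<..} t * ennreal (E (t, x, z *\<^sub>R W v)) \<partial>lborel \<partial>lborel) \<partial>lborel) \<partial>lborel)"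
    unfolding G_def nn_integral_exp_weighted_swap[OF E_measurable] ..
  finally show ?thesis .
qed

lemma exp_ray_average_tendsto_0:
  fixes H :: "'a::euclidean_space \<Rightarrow> ennreal"
  assumes [measurable]: "H \<in> borel_measurable borel"
    and H_le: "\<And>y. H y \<le> B" and "B < \<infinity>" and H_tendsto: "(H \<longlongrightarrow> 0) (nhds 0)"
    and "S \<longlonglongrightarrow> 0" and "0 < b"
  shows "(\<lambda>n. \<integral>\<^sup>+z. ennreal (indicator {0..} z * exp (- b * z)) * H ((S n * z) *\<^sub>R y) \<partial>lborel) \<longlonglongrightarrow> 0"
proof -
  have "(\<lambda>n. \<integral>\<^sup>+z. ennreal (indicator {0..} z * exp (- b * z)) * H ((S n * z) *\<^sub>R y) \<partial>lborel)
      \<longlonglongrightarrow> (\<integral>\<^sup>+(z::real). 0 \<partial>lborel)"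
  proof (rule nn_integral_dominated_convergence[where w="\<lambda>z. ennreal (indicator {0..} z * exp (- b * z)) * B"
      and u="\<lambda>n z. ennreal (indicator {0..} z * exp (- b * z)) * H ((S n * z) *\<^sub>R y)" and u'="\<lambda>z. 0"])
    show "(\<integral>\<^sup>+z. ennreal (indicator {0..} z * exp (- b * z)) * B \<partial>lborel) < \<infinity>"
      using assms(3)
      by (simp add: nn_integral_multc nn_integral_exp_neg[OF \<open>0 < b\<close>, simplified] ennreal_mult_less_top)
    show "AE z in lborel. ennreal (indicator {0..} z * exp (- b * z)) * H ((S n * z) *\<^sub>R y)
        \<le> ennreal (indicator {0..} z * exp (- b * z)) * B" for n
      using H_le by (intro AE_I2 mult_left_mono) auto
    show "AE z in lborel. (\<lambda>n. ennreal (indicator {0..} z * exp (- b * z)) * H ((S n * z) *\<^sub>R y)) \<longlonglongrightarrow> 0"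
    proof (intro AE_I2)
      fix z :: real
      have "(\<lambda>n. (S n * z) *\<^sub>R y) \<longlonglongrightarrow> 0"
        using tendsto_scaleR[OF tendsto_mult[OF \<open>S \<longlonglongrightarrow> 0\<close> tendsto_const[of z]] tendsto_const[of y]]
        by simp
      then have "(\<lambda>n. H ((S n * z) *\<^sub>R y)) \<longlonglongrightarrow> 0"
        by (rule filterlim_compose[OF H_tendsto])
      then show "(\<lambda>n. ennreal (indicator {0..} z * exp (- b * z)) * H ((S n * z) *\<^sub>R y)) \<longlonglongrightarrow> 0"
        using ennreal_tendsto_cmult[of "ennreal (indicator {0..} z * exp (- b * z))"] by fastforce
    qed
  qed measurable
  then show ?thesis by simp
qed

lemma weighted_ray_average_tendsto_0:
  fixes F :: "'a::euclidean_space \<Rightarrow> real" and H :: "'a \<Rightarrow> ennreal" and V :: "'a \<Rightarrow> 'a"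
  assumes [measurable]: "F \<in> borel_measurable borel" "H \<in> borel_measurable borel" "V \<in> borel_measurable borel"
    and F_integral: "(\<integral>\<^sup>+v. ennreal (F v) \<partial>lborel) = 1"
    and H_le: "\<And>y. H y \<le> B" and B_finite: "B < \<infinity>" and H_tendsto: "(H \<longlongrightarrow> 0) (nhds 0)"
    and b: "0 < b"
  shows "((\<lambda>\<epsilon>. \<integral>\<^sup>+v. ennreal (F v) *
      (\<integral>\<^sup>+z. ennreal (indicator {0..} z * exp (- b * z)) * H ((\<epsilon> * z) *\<^sub>R V v) \<partial>lborel) \<partial>lborel)
    \<longlongrightarrow> 0) (at_right 0)"
proof (rule tendsto_at_right_sequentially[of 0 1])
  fix S :: "nat \<Rightarrow> real"
  assume "S \<longlonglongrightarrow> 0"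
  have exp_B: "(\<integral>\<^sup>+z. ennreal (indicator {0..} z * exp (- b * z)) * B \<partial>lborel) = ennreal (1 / b) * B"
    by (simp add: nn_integral_multc nn_integral_exp_neg[OF b, simplified])
  have "(\<lambda>n. \<integral>\<^sup>+v. ennreal (F v) *
      (\<integral>\<^sup>+z. ennreal (indicator {0..} z * exp (- b * z)) * H ((S n * z) *\<^sub>R V v) \<partial>lborel) \<partial>lborel)
    \<longlonglongrightarrow> (\<integral>\<^sup>+(v::'a). 0 \<partial>lborel)"
  proof (rule nn_integral_dominated_convergence[where w="\<lambda>v. ennreal (F v) * (ennreal (1 / b) * B)"
      and u="\<lambda>n v. ennreal (F v) *
        (\<integral>\<^sup>+z. ennreal (indicator {0..} z * exp (- b * z)) * H ((S n * z) *\<^sub>R V v) \<partial>lborel)"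
      and u'="\<lambda>v. 0"])
    show "(\<integral>\<^sup>+v. ennreal (F v) * (ennreal (1 / b) * B) \<partial>lborel) < \<infinity>"
      using B_finite by (simp add: nn_integral_multc F_integral ennreal_mult_less_top)
    show "AE v in lborel. ennreal (F v) *
        (\<integral>\<^sup>+z. ennreal (indicator {0..} z * exp (- b * z)) * H ((S n * z) *\<^sub>R V v) \<partial>lborel)
      \<le> ennreal (F v) * (ennreal (1 / b) * B)" for n
      unfolding exp_B[symmetric] using H_le by (intro AE_I2 mult_left_mono nn_integral_mono) auto
    show "AE v in lborel. (\<lambda>n. ennreal (F v) *
        (\<integral>\<^sup>+z. ennreal (indicator {0..} z * exp (- b * z)) * H ((S n * z) *\<^sub>R V v) \<partial>lborel)) \<longlonglongrightarrow> 0"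
      using ennreal_tendsto_cmult[OF _ exp_ray_average_tendsto_0[OF _ H_le B_finite H_tendsto \<open>S \<longlonglongrightarrow> 0\<close> b]]
      by (intro AE_I2) simp_all
  qed measurable
  then show "(\<lambda>n. \<integral>\<^sup>+v. ennreal (F v) *
      (\<integral>\<^sup>+z. ennreal (indicator {0..} z * exp (- b * z)) * H ((S n * z) *\<^sub>R V v) \<partial>lborel) \<partial>lborel) \<longlonglongrightarrow> 0"
    by simp
qed simp

section \<open>The weight lcw\<close>

lemma powr_half_bounds:
  fixes r \<beta> :: real
  assumes "1 \<le> r" "r \<le> 2"
  shows "2 powr (- \<bar>\<beta>\<bar> / 2) \<le> r powr (\<beta> / 2)" and "r powr (\<beta> / 2) \<le> 2 powr (\<bar>\<beta>\<bar> / 2)"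
proof -
  have "r powr (\<beta> / 2) \<le> r powr (\<bar>\<beta>\<bar> / 2)" using assms by (intro powr_mono) auto
  also have "\<dots> \<le> 2 powr (\<bar>\<beta>\<bar> / 2)" using assms by (intro powr_mono2) auto
  finally show "r powr (\<beta> / 2) \<le> 2 powr (\<bar>\<beta>\<bar> / 2)" .
  have "2 powr (- \<bar>\<beta>\<bar> / 2) \<le> r powr (- \<bar>\<beta>\<bar> / 2)" using assms by (intro powr_mono2') auto
  also have "\<dots> \<le> r powr (\<beta> / 2)" using assms by (intro powr_mono) auto
  finally show "2 powr (- \<bar>\<beta>\<bar> / 2) \<le> r powr (\<beta> / 2)" .
qed

lemma lcw_pos: "0 < lcw \<beta> v"
  unfolding lcw_def by auto

lemma lcw_measurable[measurable]: "lcw \<beta> \<in> borel_measurable borel"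
  unfolding lcw_def[abs_def] by measurable

text \<open>\<open>lcw \<beta> v * jbr v powr \<beta> = r powr (\<beta>/2)\<close> with \<open>r = 1 + |v|\<^sup>2\<close> for \<open>|v| \<le> 1\<close> and
  \<open>r = 1 + |v|\<^sup>-\<^sup>2\<close> otherwise; in both cases \<open>1 \<le> r \<le> 2\<close>.\<close>
lemma lcw_jbr_bounds:
  fixes v :: "'a::euclidean_space"
  shows "2 powr (- \<bar>\<beta>\<bar> / 2) \<le> lcw \<beta> v * jbr v powr \<beta>"
    and "lcw \<beta> v * jbr v powr \<beta> \<le> 2 powr (\<bar>\<beta>\<bar> / 2)"
proof -
  have j: "jbr v powr \<beta> = (1 + (norm v)^2) powr (\<beta> / 2)"
    unfolding jbr_def by (simp add: powr_half_sqrt[symmetric] powr_powr add_pos_nonneg)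
  obtain r where "1 \<le> r" "r \<le> 2" "lcw \<beta> v * jbr v powr \<beta> = r powr (\<beta> / 2)"
  proof (cases "norm v \<le> 1")
    case True
    then have "(norm v)^2 \<le> 1" by (simp add: power_le_one)
    then show ?thesis
      using True that[of "1 + (norm v)^2"] by (simp add: lcw_def j)
  next
    case False
    then have nv: "1 < norm v" by simp
    have p2: "((norm v)^2) powr (- (\<beta> / 2)) = norm v powr (- \<beta>)"
    proof -
      have "((norm v)^2) powr (- (\<beta> / 2)) = (norm v powr 2) powr (- (\<beta> / 2))"
        using powr_realpow[of "norm v" 2] nv by simp
      also have "\<dots> = norm v powr (- \<beta>)"
        unfolding powr_powr by simp
      finally show ?thesis .
    qed
    have "lcw \<beta> v * jbr v powr \<beta> = ((norm v)^2) powr (- (\<beta> / 2)) * (1 + (norm v)^2) powr (\<beta> / 2)"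
      using False by (simp add: lcw_def j p2)
    also have "\<dots> = (1 + (norm v)^2) powr (\<beta> / 2) / ((norm v)^2) powr (\<beta> / 2)"
      unfolding powr_minus by (rule divide_inverse_commute[symmetric])
    also have "\<dots> = ((1 + (norm v)^2) / (norm v)^2) powr (\<beta> / 2)"
      by (rule powr_divide[symmetric])
    finally have "lcw \<beta> v * jbr v powr \<beta> = ((1 + (norm v)^2) / (norm v)^2) powr (\<beta> / 2)" .
    moreover have "1 \<le> (1 + (norm v)^2) / (norm v)^2" "(1 + (norm v)^2) / (norm v)^2 \<le> 2"
      using nv by (auto simp: le_divide_eq divide_le_eq one_le_power)
    ultimately show ?thesis using that by auto
  qed
  then show "2 powr (- \<bar>\<beta>\<bar> / 2) \<le> lcw \<beta> v * jbr v powr \<beta>"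
    and "lcw \<beta> v * jbr v powr \<beta> \<le> 2 powr (\<bar>\<beta>\<bar> / 2)"
    using powr_half_bounds by auto
qed

lemma lcw_mult_lower:
  assumes "\<nu>1 * jbr v powr \<beta> \<le> n" and "0 < \<nu>1"
  shows "\<nu>1 * 2 powr (- \<bar>\<beta>\<bar> / 2) \<le> lcw \<beta> v * n"
proof -
  have "\<nu>1 * 2 powr (- \<bar>\<beta>\<bar> / 2) \<le> \<nu>1 * (lcw \<beta> v * jbr v powr \<beta>)"
    using lcw_jbr_bounds(1)[of \<beta> v] assms(2) by simp
  also have "\<dots> \<le> lcw \<beta> v * n"
    using mult_left_mono[OF assms(1) less_imp_le[OF lcw_pos]] by (simp add: mult_ac)
  finally show ?thesis .
qed

lemma lcw_mult_upper:
  assumes "n \<le> \<nu>2 * jbr v powr \<beta>" and "0 < \<nu>2"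
  shows "lcw \<beta> v * n \<le> \<nu>2 * 2 powr (\<bar>\<beta>\<bar> / 2)"
proof -
  have "lcw \<beta> v * n \<le> \<nu>2 * (lcw \<beta> v * jbr v powr \<beta>)"
    using mult_left_mono[OF assms(1) less_imp_le[OF lcw_pos]] by (simp add: mult_ac)
  also have "\<dots> \<le> \<nu>2 * 2 powr (\<bar>\<beta>\<bar> / 2)"
    using lcw_jbr_bounds(2)[of \<beta> v] assms(2) by simp
  finally show ?thesis .
qed

section \<open>The corrector\<close>

locale bounded_rate =
  fixes N :: "'a::euclidean_space \<Rightarrow> 'a \<Rightarrow> real" and \<beta> b A :: real
  assumes rate_continuous: "\<And>v. continuous_on UNIV (\<lambda>x. N x v)"
    and rate_lower: "\<And>x v. b \<le> lcw \<beta> v * N x v"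
    and rate_upper: "\<And>x v. lcw \<beta> v * N x v \<le> A"
    and rate_lower_pos: "0 < b"
begin

lemma rate_upper_nonneg: "0 \<le> A"
  using rate_lower[of 0 0] rate_upper[of 0 0] rate_lower_pos by linarith

lemma chi_kernel_average:
  obtains k where "set_integrable lborel {0..} k" "(LINT z:{0..}|lborel. k z) = 1"
    "\<And>z. 0 \<le> k z" "\<And>z. 0 \<le> z \<Longrightarrow> k z \<le> A * exp (- b * z)"
    "\<And>g t. chi N \<beta> g \<epsilon> t x v = (LINT z:{0..}|lborel. k z * g (t, x + (\<epsilon> * lcw \<beta> v * z) *\<^sub>R v))"
proof -
  define q where "q s = lcw \<beta> v * N (x + (\<epsilon> * lcw \<beta> v * s) *\<^sub>R v) v" for s
  have q: "continuous_on UNIV q" "\<And>s. b \<le> q s" "\<And>s. q s \<le> A"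
    unfolding q_def using rate_lower rate_upper
    by (auto intro!: continuous_intros continuous_on_compose2[OF rate_continuous[of v]])
  show ?thesis
  proof (rule that[of "exit_density q"])
    show "chi N \<beta> g \<epsilon> t x v = (LINT z:{0..}|lborel. exit_density q z * g (t, x + (\<epsilon> * lcw \<beta> v * z) *\<^sub>R v))"
      for g t
      unfolding chi_def Let_def exit_density_def q_def by simp
  qed (use set_integrable_exit_density[OF q rate_lower_pos] set_integral_exit_density[OF q rate_lower_pos]
        exit_density_nonneg[OF q rate_lower_pos] exit_density_le_exp[OF q rate_lower_pos] in auto)
qed

lemma chi_minus_const_square_le:
  assumes gc: "continuous_on UNIV g" and gM: "\<And>p. \<bar>g p\<bar> \<le> M"
  shows "ennreal ((chi N \<beta> g \<epsilon> t x v - c)^2) \<le> (\<integral>\<^sup>+z. ennreal (indicator {0..} z *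
      (exp (- b * z) * (A * (g (t, x + z *\<^sub>R ((\<epsilon> * lcw \<beta> v) *\<^sub>R v)) - c)^2))) \<partial>lborel)"
proof -
  obtain k where k: "set_integrable lborel {0..} k" "(LINT z:{0..}|lborel. k z) = 1"
    "\<And>z. 0 \<le> k z" "\<And>z. 0 \<le> z \<Longrightarrow> k z \<le> A * exp (- b * z)"
    "\<And>g t. chi N \<beta> g \<epsilon> t x v = (LINT z:{0..}|lborel. k z * g (t, x + (\<epsilon> * lcw \<beta> v * z) *\<^sub>R v))"
    using chi_kernel_average[of \<epsilon> x v] by blast
  define h where "h z = g (t, x + (\<epsilon> * lcw \<beta> v * z) *\<^sub>R v)" for z
  have hm[measurable]: "h \<in> borel_measurable borel"
    unfolding h_def
    by (intro borel_measurable_continuous_onI continuous_on_compose2[OF gc] continuous_intros) auto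
  have hM: "0 \<le> z \<Longrightarrow> \<bar>h z\<bar> \<le> M" for z
    unfolding h_def by (rule gM)
  have h_minus_c: "0 \<le> z \<Longrightarrow> \<bar>h z - c\<bar> \<le> M + \<bar>c\<bar>" for z
    using abs_triangle_ineq4[of "h z" c] gM[of "(t, x + (\<epsilon> * lcw \<beta> v * z) *\<^sub>R v)"]
    unfolding h_def by linarith
  have "chi N \<beta> g \<epsilon> t x v - c = (LINT z:{0..}|lborel. k z * (h z - c))"
    using set_integral_density_diff_const[OF k(1-3) hm hM] k(5) by (simp add: h_def)
  also have "ennreal ((LINT z:{0..}|lborel. k z * (h z - c))^2)
      \<le> ennreal A * (\<integral>\<^sup>+z. ennreal (indicator {0..} z * (exp (- b * z) * (h z - c)^2)) \<partial>lborel)"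
    by (rule nn_set_integral_density_square_le[OF k(1-3) _ h_minus_c k(4)]) measurable
  also have "\<dots> = (\<integral>\<^sup>+z. ennreal A * ennreal (indicator {0..} z * (exp (- b * z) * (h z - c)^2)) \<partial>lborel)"
    by (rule nn_integral_cmult[symmetric]) measurable
  also have "\<dots> = (\<integral>\<^sup>+z. ennreal (indicator {0..} z *
      (exp (- b * z) * (A * (g (t, x + z *\<^sub>R ((\<epsilon> * lcw \<beta> v) *\<^sub>R v)) - c)^2))) \<partial>lborel)"
  proof (intro nn_integral_cong)
    fix z :: real
    show "ennreal A * ennreal (indicator {0..} z * (exp (- b * z) * (h z - c)^2))
        = ennreal (indicator {0..} z * (exp (- b * z) * (A * (g (t, x + z *\<^sub>R ((\<epsilon> * lcw \<beta> v) *\<^sub>R v)) - c)^2)))"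
      using rate_upper_nonneg by (simp add: h_def ennreal_mult'[symmetric] mult_ac)
  qed
  finally show ?thesis .
qed

lemma has_real_derivative_chi:
  assumes gc: "continuous_on UNIV g" and gM: "\<And>p. \<bar>g p\<bar> \<le> M"
    and gd_uc: "uniformly_continuous_on UNIV gd" and gdM: "\<And>p. \<bar>gd p\<bar> \<le> M'"
    and gd: "\<And>s y. ((\<lambda>s. g (s, y)) has_real_derivative gd (s, y)) (at s)"
  shows "((\<lambda>s. chi N \<beta> g \<epsilon> s x v) has_real_derivative chi N \<beta> gd \<epsilon> t x v) (at t)"
proof -
  obtain k where k: "set_integrable lborel {0..} k" "(LINT z:{0..}|lborel. k z) = 1" "\<And>z. 0 \<le> k z"
    "\<And>z. 0 \<le> z \<Longrightarrow> k z \<le> A * exp (- b * z)"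
    "\<And>g t. chi N \<beta> g \<epsilon> t x v = (LINT z:{0..}|lborel. k z * g (t, x + (\<epsilon> * lcw \<beta> v * z) *\<^sub>R v))"
    using chi_kernel_average[of \<epsilon> x v] by blast
  define y where "y z = x + (\<epsilon> * lcw \<beta> v * z) *\<^sub>R v" for z
  have meas: "(\<lambda>z. G (s, y z)) \<in> borel_measurable borel" if "continuous_on UNIV G" for G :: "real \<times> 'a \<Rightarrow> real" and s
    unfolding y_def
    by (intro borel_measurable_continuous_onI continuous_on_compose2[OF that] continuous_intros) auto
  have gd_close: "\<exists>d>0. \<forall>s z. \<bar>s - t\<bar> < d \<longrightarrow> \<bar>gd (s, y z) - gd (t, y z)\<bar> \<le> e" if "0 < e" for e
  proof -
    obtain d where "0 < d" "\<And>p q. dist p q < d \<Longrightarrow> dist (gd p) (gd q) < e"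
      using gd_uc[unfolded uniformly_continuous_on_def, rule_format, OF \<open>0 < e\<close>] by (metis UNIV_I)
    then show ?thesis
      by (intro exI[of _ d]) (auto simp: dist_Pair_Pair dist_real_def intro: less_imp_le)
  qed
  have gdc: "continuous_on UNIV gd"
    by (rule uniformly_continuous_imp_continuous[OF gd_uc])
  show ?thesis
    unfolding k(5) y_def[symmetric]
    by (rule has_real_derivative_set_integral_density[OF k(1-3) meas[OF gc] meas[OF gdc] _ _ _ gd_close])
       (use gM gdM gd in auto)
qed

context
  fixes F :: "'a \<Rightarrow> real"
  assumes F_measurable[measurable]: "F \<in> borel_measurable borel"
    and F_nonneg: "\<And>v. 0 \<le> F v" and F_integral: "(\<integral>\<^sup>+v. ennreal (F v) \<partial>lborel) = 1"
begin

lemma L2F_sq_chi_le: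
  assumes gc: "continuous_on UNIV g" and gM: "\<And>p. \<bar>g p\<bar> \<le> M"
  shows "L2F_sq F (chi N \<beta> g \<epsilon>) \<le> ennreal (A / b) * L2_sq (\<lambda>t x. g (t, x))"
proof -
  have gm[measurable]: "g \<in> borel_measurable (borel \<Otimes>\<^sub>M borel)"
    using borel_measurable_continuous_onI[OF gc] by (simp add: borel_prod)
  define E where "E p = A * (g (fst p, fst (snd p) + snd (snd p)))^2" for p :: "real \<times> 'a \<times> 'a"
  have [measurable]: "E \<in> borel_measurable (borel \<Otimes>\<^sub>M borel \<Otimes>\<^sub>M borel)"
    unfolding E_def[abs_def] by measurable
  have E_nonneg: "0 \<le> E p" for p
    using rate_upper_nonneg by (simp add: E_def)
  have W_measurable: "(\<lambda>v. (\<epsilon> * lcw \<beta> v) *\<^sub>R v) \<in> borel_measurable borel"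
    by measurable
  have "L2F_sq F (chi N \<beta> g \<epsilon>) \<le> (\<integral>\<^sup>+v. ennreal (F v) * (\<integral>\<^sup>+z. ennreal (indicator {0..} z * exp (- b * z)) *
      (\<integral>\<^sup>+x. \<integral>\<^sup>+t. indicator {0<..} t * ennreal (E (t, x, z *\<^sub>R ((\<epsilon> * lcw \<beta> v) *\<^sub>R v)))
        \<partial>lborel \<partial>lborel) \<partial>lborel) \<partial>lborel)"
  proof (rule L2F_sq_le_ray_average[OF F_measurable W_measurable _ E_nonneg F_nonneg])
    show "ennreal ((chi N \<beta> g \<epsilon> t x v)^2) \<le> (\<integral>\<^sup>+z. ennreal (indicator {0..} z *
        (exp (- b * z) * E (t, x, z *\<^sub>R ((\<epsilon> * lcw \<beta> v) *\<^sub>R v)))) \<partial>lborel)" for t x v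
      using chi_minus_const_square_le[OF gc gM, of \<epsilon> t x v 0] by (simp add: E_def)
  qed measurable
  also have "\<dots> = (\<integral>\<^sup>+v. ennreal (F v) * (\<integral>\<^sup>+z. ennreal (indicator {0..} z * exp (- b * z)) *
      (ennreal A * L2_sq (\<lambda>t x. g (t, x))) \<partial>lborel) \<partial>lborel)"
    by (simp add: E_def L2_sq_translate[OF gm rate_upper_nonneg])
  also have "\<dots> = (\<integral>\<^sup>+v. ennreal (F v) * (ennreal (1 / b) * (ennreal A * L2_sq (\<lambda>t x. g (t, x)))) \<partial>lborel)"
    by (subst nn_integral_multc) (measurable, simp add: nn_integral_exp_neg[OF rate_lower_pos, simplified])
  also have "\<dots> = ennreal (1 / b) * (ennreal A * L2_sq (\<lambda>t x. g (t, x)))"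
    by (subst nn_integral_multc) (measurable, simp add: F_integral)
  also have "\<dots> = ennreal (A / b) * L2_sq (\<lambda>t x. g (t, x))"
    using rate_upper_nonneg rate_lower_pos
    by (subst mult.assoc[symmetric], subst ennreal_mult[symmetric]) auto
  finally show ?thesis .
qed

lemma L2F_sq_chi_minus_le:
  assumes gc: "continuous_on UNIV g" and gM: "\<And>p. \<bar>g p\<bar> \<le> M"
  shows "L2F_sq F (\<lambda>t x v. chi N \<beta> g \<epsilon> t x v - g (t, x)) \<le> (\<integral>\<^sup>+v. ennreal (F v) *
      (\<integral>\<^sup>+z. ennreal (indicator {0..} z * exp (- b * z)) *
        (ennreal A * translation_defect g ((\<epsilon> * z) *\<^sub>R (lcw \<beta> v *\<^sub>R v))) \<partial>lborel) \<partial>lborel)"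
proof -
  have gm[measurable]: "g \<in> borel_measurable (borel \<Otimes>\<^sub>M borel)"
    using borel_measurable_continuous_onI[OF gc] by (simp add: borel_prod)
  define E where "E p = A * (g (fst p, fst (snd p) + snd (snd p)) - g (fst p, fst (snd p)))^2"
    for p :: "real \<times> 'a \<times> 'a"
  have [measurable]: "E \<in> borel_measurable (borel \<Otimes>\<^sub>M borel \<Otimes>\<^sub>M borel)"
    unfolding E_def[abs_def] by measurable
  have E_nonneg: "0 \<le> E p" for p
    using rate_upper_nonneg by (simp add: E_def)
  have W_measurable: "(\<lambda>v. (\<epsilon> * lcw \<beta> v) *\<^sub>R v) \<in> borel_measurable borel"
    by measurable
  have "L2F_sq F (\<lambda>t x v. chi N \<beta> g \<epsilon> t x v - g (t, x)) \<le> (\<integral>\<^sup>+v. ennreal (F v) *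
      (\<integral>\<^sup>+z. ennreal (indicator {0..} z * exp (- b * z)) * (\<integral>\<^sup>+x. \<integral>\<^sup>+t. indicator {0<..} t *
        ennreal (E (t, x, z *\<^sub>R ((\<epsilon> * lcw \<beta> v) *\<^sub>R v))) \<partial>lborel \<partial>lborel) \<partial>lborel) \<partial>lborel)"
  proof (rule L2F_sq_le_ray_average[OF F_measurable W_measurable _ E_nonneg F_nonneg])
    show "ennreal ((chi N \<beta> g \<epsilon> t x v - g (t, x))^2) \<le> (\<integral>\<^sup>+z. ennreal (indicator {0..} z *
        (exp (- b * z) * E (t, x, z *\<^sub>R ((\<epsilon> * lcw \<beta> v) *\<^sub>R v)))) \<partial>lborel)" for t x v
      using chi_minus_const_square_le[OF gc gM, of \<epsilon> t x v "g (t, x)"] by (simp add: E_def)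
  qed measurable
  also have "\<dots> = (\<integral>\<^sup>+v. ennreal (F v) * (\<integral>\<^sup>+z. ennreal (indicator {0..} z * exp (- b * z)) *
      (ennreal A * translation_defect g ((\<epsilon> * z) *\<^sub>R (lcw \<beta> v *\<^sub>R v))) \<partial>lborel) \<partial>lborel)"
    by (simp add: E_def translation_defect_cmult[OF gm rate_upper_nonneg] mult_ac)
  finally show ?thesis .
qed

lemma L2F_sq_chi_minus_tendsto_0:
  assumes gc: "continuous_on UNIV g" and gR: "\<And>p. R < norm p \<Longrightarrow> g p = 0"
  shows "((\<lambda>\<epsilon>. L2F_sq F (\<lambda>t x v. chi N \<beta> g \<epsilon> t x v - g (t, x))) \<longlongrightarrow> 0) (at_right 0)"
proof -
  obtain M where gM: "\<And>p. \<bar>g p\<bar> \<le> M"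
    using bounded_vanishing_outside_ball[OF gc gR] by blast
  have [measurable]: "g \<in> borel_measurable (borel \<Otimes>\<^sub>M borel)"
    using borel_measurable_continuous_onI[OF gc] by (simp add: borel_prod)
  have "ennreal A * translation_defect g y \<le> ennreal A * (4 * L2_sq (\<lambda>t x. g (t, x)))" for y
    by (intro mult_left_mono translation_defect_le) auto
  moreover have "ennreal A * (4 * L2_sq (\<lambda>t x. g (t, x))) < \<infinity>"
    using L2_sq_finite[OF gc gR] by (simp add: ennreal_mult_less_top)
  moreover have "((\<lambda>y. ennreal A * translation_defect g y) \<longlongrightarrow> 0) (nhds 0)"
    using ennreal_tendsto_cmult[OF _ translation_defect_tendsto_0[OF gc gR]] by simp
  ultimately have lim: "((\<lambda>\<epsilon>. \<integral>\<^sup>+v. ennreal (F v) * (\<integral>\<^sup>+z. ennreal (indicator {0..} z * exp (- b * z)) *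
      (ennreal A * translation_defect g ((\<epsilon> * z) *\<^sub>R (lcw \<beta> v *\<^sub>R v))) \<partial>lborel) \<partial>lborel) \<longlongrightarrow> 0)
      (at_right 0)"
    by (intro weighted_ray_average_tendsto_0[OF F_measurable _ _ F_integral _ _ _ rate_lower_pos]) measurable
  show ?thesis
    by (rule tendsto_sandwich[OF _ _ tendsto_const lim])
       (simp, intro always_eventually allI L2F_sq_chi_minus_le[OF gc gM])
qed

end

end

lemma bounded_rate_of_jbr_bounds:
  fixes N :: "'a::euclidean_space \<Rightarrow> 'a \<Rightarrow> real"
  assumes "\<And>v. continuous_on UNIV (\<lambda>x. N x v)" and "0 < \<nu>1" "0 < \<nu>2"
    and bounds: "\<And>x v. \<nu>1 * jbr v powr \<beta> \<le> N x v \<and> N x v \<le> \<nu>2 * jbr v powr \<beta>"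
  shows "bounded_rate N \<beta> (\<nu>1 * 2 powr (- \<bar>\<beta>\<bar> / 2)) (\<nu>2 * 2 powr (\<bar>\<beta>\<bar> / 2))"
proof
  show "\<nu>1 * 2 powr (- \<bar>\<beta>\<bar> / 2) \<le> lcw \<beta> v * N x v" for x v
    by (rule lcw_mult_lower) (use bounds assms(2) in auto)
  show "lcw \<beta> v * N x v \<le> \<nu>2 * 2 powr (\<bar>\<beta>\<bar> / 2)" for x v
    by (rule lcw_mult_upper) (use bounds assms(3) in auto)
qed (use assms(1,2) in auto)

lemma Ck_Suc_imp_continuous: "Ck (Suc k) f \<Longrightarrow> continuous_on UNIV f"
  by (auto intro!: continuous_at_imp_continuous_on differentiable_imp_continuous_within)

lemma has_real_derivative_fst_slice:
  fixes \<phi> :: "real \<times> 'a::real_normed_vector \<Rightarrow> real"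
  assumes "\<phi> differentiable (at (s, y))"
  shows "((\<lambda>s. \<phi> (s, y)) has_real_derivative frechet_derivative \<phi> (at (s, y)) (1, 0)) (at s)"
proof -
  define D where "D = frechet_derivative \<phi> (at (s, y))"
  have D: "(\<phi> has_derivative D) (at (s, y))"
    unfolding D_def using assms frechet_derivative_works by blast
  have "((\<lambda>s. (s, y)) has_derivative (\<lambda>h. (h, 0))) (at s)"
    by (auto intro!: derivative_eq_intros)
  from diff_chain_at[OF this D] have "((\<lambda>s. \<phi> (s, y)) has_derivative (\<lambda>h. D (h, 0))) (at s)"
    by (simp add: comp_def)
  moreover have "(\<lambda>h. D (h, 0)) = (*) (D (1, 0))"
  proof
    fix h :: real
    have "D (h, 0) = D (h *\<^sub>R (1, 0))" by simp
    also have "\<dots> = h *\<^sub>R D (1, 0)"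
      by (rule linear_cmul[OF has_derivative_linear[OF D]])
    finally show "D (h, 0) = D (1, 0) * h" by simp
  qed
  ultimately show ?thesis
    unfolding has_field_derivative_def D_def by simp
qed

lemma frechet_derivative_fst_eq_0_outside_ball:
  fixes \<phi> :: "real \<times> 'a::real_normed_vector \<Rightarrow> real"
  assumes diff: "\<And>p. \<phi> differentiable (at p)" and vanish: "\<And>p. R < norm p \<Longrightarrow> \<phi> p = 0"
    and p: "R < norm (s, y)"
  shows "frechet_derivative \<phi> (at (s, y)) (1, 0) = 0"
proof -
  have "((\<lambda>_. 0) has_real_derivative frechet_derivative \<phi> (at (s, y)) (1, 0)) (at s)"
  proof (rule has_field_derivative_transform_within_open[OF has_real_derivative_fst_slice[OF diff]])
    show "open {s'. R < norm (s', y)}"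
      by (intro open_Collect_less continuous_intros)
  qed (use p vanish in auto)
  then show ?thesis
    using DERIV_unique DERIV_const by blast
qed

lemma test_fun_vanishes_outside_ball:
  assumes "test_fun \<phi>"
  obtains R where "\<And>p. R < norm p \<Longrightarrow> \<phi> p = 0"
proof -
  have "bounded (closure {p. \<phi> p \<noteq> 0})"
    using assms compact_imp_bounded by (auto simp: test_fun_def)
  then obtain R where R: "\<And>p. p \<in> closure {p. \<phi> p \<noteq> 0} \<Longrightarrow> norm p \<le> R"
    using bounded_pos by metis
  have "\<phi> p = 0" if "R < norm p" for p
    using R[of p] closure_subset[of "{p. \<phi> p \<noteq> 0}"] that by force
  then show ?thesis by (rule that)
qed

lemma test_fun_time_derivative:
  fixes \<phi> :: "real \<times> 'a::euclidean_space \<Rightarrow> real"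
  assumes "test_fun \<phi>"
  obtains \<psi> R where "continuous_on UNIV \<phi>" "continuous_on UNIV \<psi>"
    "\<And>p. R < norm p \<Longrightarrow> \<phi> p = 0" "\<And>p. R < norm p \<Longrightarrow> \<psi> p = 0"
    "\<And>s y. ((\<lambda>s. \<phi> (s, y)) has_real_derivative \<psi> (s, y)) (at s)"
proof -
  define \<psi> where "\<psi> p = frechet_derivative \<phi> (at p) (1, 0)" for p
  have diff: "\<And>p. \<phi> differentiable (at p)" and "continuous_on UNIV \<psi>"
    using assms by (auto simp: test_fun_def smooth_fun_def \<psi>_def Basis_prod_def dest: spec[of _ 1])
  moreover have "continuous_on UNIV \<phi>"
    using diff by (intro continuous_at_imp_continuous_on ballI differentiable_imp_continuous_within)
  moreover obtain R where \<phi>R: "\<And>p. R < norm p \<Longrightarrow> \<phi> p = 0"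
    using test_fun_vanishes_outside_ball[OF assms] by blast
  moreover have "\<And>p. R < norm p \<Longrightarrow> \<psi> p = 0"
    using frechet_derivative_fst_eq_0_outside_ball[OF diff \<phi>R] by (auto simp: \<psi>_def)
  moreover have "\<And>s y. ((\<lambda>s. \<phi> (s, y)) has_real_derivative \<psi> (s, y)) (at s)"
    unfolding \<psi>_def by (rule has_real_derivative_fst_slice[OF diff])
  ultimately show ?thesis
    using that by blast
qed

lemma integrable_if_integral_eq_1:
  fixes f :: "'a \<Rightarrow> real"
  assumes "integral\<^sup>L M f = 1"
  shows "integrable M f"
  using assms not_integrable_integral_eq[of M f] by auto

theorem lemma2p3:
  fixes \<sigma> :: "'a::euclidean_space \<Rightarrow> 'a \<Rightarrow> 'a \<Rightarrow> real"
    and F :: "'a \<Rightarrow> real"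
    and \<nu>0 :: "'a \<Rightarrow> real"
    and \<beta> \<nu>1 \<nu>2 :: real
    and \<phi> :: "real \<times> 'a \<Rightarrow> real"
  assumes sigma_nonneg: "\<And>x v v'. \<sigma> x v v' \<ge> 0"
    and sigma_meas: "(\<lambda>(x, v, v'). \<sigma> x v v') \<in> borel_measurable (lborel :: ('a \<times> 'a \<times> 'a) measure)"
    \<comment> \<open>(A2)\<close>
    and F_L1nu: "\<And>x. integrable lborel (\<lambda>v. F v * nu \<sigma> x v)"
    and F_eq: "\<And>x v. Qop \<sigma> F x v = 0"
    and F_pos: "\<And>v. F v > 0"
    and F_mass: "(\<integral>v. F v \<partial>lborel) = 1"
    \<comment> \<open>(B2)\<close>
    and nu12: "\<nu>1 > 0" "\<nu>2 > 0"
    and nu_bounds: "\<And>x v. \<nu>1 * jbr v powr \<beta> \<le> nu \<sigma> x v \<and> nu \<sigma> x v \<le> \<nu>2 * jbr v powr \<beta>"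
    and nu_limit: "\<forall>e>0. \<exists>R. \<forall>x v. norm v \<ge> R \<longrightarrow> \<bar>norm v powr (- \<beta>) * nu \<sigma> x v - \<nu>0 x\<bar> < e"
    and nu_C1: "\<And>v. Ck 1 (\<lambda>x. nu \<sigma> x v)"
    and nu_deriv: "\<exists>C. AE p in (lborel :: ('a \<times> 'a) measure).
          \<forall>b\<in>Basis. jbr (snd p) powr (- \<beta>) *
             \<bar>frechet_derivative (\<lambda>y. nu \<sigma> y (snd p)) (at (fst p)) b\<bar> \<le> C"
    \<comment> \<open>test function\<close>
    and phi_test: "test_fun \<phi>"
  shows "((\<lambda>\<epsilon>. L2F_sq F (\<lambda>t x v. chi (nu \<sigma>) \<beta> \<phi> \<epsilon> t x v - \<phi> (t, x)))
            \<longlongrightarrow> 0) (at_right 0) \<and>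
         ((\<lambda>\<epsilon>. L2F_sq F (\<lambda>t x v. deriv (\<lambda>s. chi (nu \<sigma>) \<beta> \<phi> \<epsilon> s x v) t
                                   - deriv (\<lambda>s. \<phi> (s, x)) t))
            \<longlongrightarrow> 0) (at_right 0) \<and>
         (\<exists>C>0. \<forall>\<epsilon>>0.
           L2F_sq F (chi (nu \<sigma>) \<beta> \<phi> \<epsilon>) \<le> (ennreal C)^2 * L2_sq (\<lambda>t x. \<phi> (t, x)) \<and>
           L2F_sq F (\<lambda>t x v. deriv (\<lambda>s. chi (nu \<sigma>) \<beta> \<phi> \<epsilon> s x v) t)
             \<le> (ennreal C)^2 * L2_sq (\<lambda>t x. deriv (\<lambda>s. \<phi> (s, x)) t))"
proof -
  define b A where "b = \<nu>1 * 2 powr (- \<bar>\<beta>\<bar> / 2)" and "A = \<nu>2 * 2 powr (\<bar>\<beta>\<bar> / 2)"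
  interpret bounded_rate "nu \<sigma>" \<beta> b A
    unfolding b_def A_def using Ck_Suc_imp_continuous[OF nu_C1[unfolded One_nat_def]]
    by (rule bounded_rate_of_jbr_bounds[OF _ nu12 nu_bounds])
  obtain \<psi> R where \<phi>c: "continuous_on UNIV \<phi>" and \<psi>c: "continuous_on UNIV \<psi>"
    and \<phi>R: "\<And>p. R < norm p \<Longrightarrow> \<phi> p = 0" and \<psi>R: "\<And>p. R < norm p \<Longrightarrow> \<psi> p = 0"
    and \<phi>_deriv: "\<And>s y. ((\<lambda>s. \<phi> (s, y)) has_real_derivative \<psi> (s, y)) (at s)"
    by (rule test_fun_time_derivative[OF phi_test]) (rule that)
  obtain M where \<phi>M: "\<And>p. \<bar>\<phi> p\<bar> \<le> M"
    using bounded_vanishing_outside_ball[OF \<phi>c \<phi>R] by blast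
  obtain M' where \<psi>M: "\<And>p. \<bar>\<psi> p\<bar> \<le> M'"
    using bounded_vanishing_outside_ball[OF \<psi>c \<psi>R] by blast
  have F_integrable: "integrable lborel F"
    using F_mass by (rule integrable_if_integral_eq_1)
  note F = borel_measurable_integrable[OF F_integrable, simplified] less_imp_le[OF F_pos]
    nn_integral_eq_integral[OF F_integrable] F_mass
  have "deriv (\<lambda>s. chi (nu \<sigma>) \<beta> \<phi> \<epsilon> s x v) t = chi (nu \<sigma>) \<beta> \<psi> \<epsilon> t x v"
    and "deriv (\<lambda>s. \<phi> (s, x)) t = \<psi> (t, x)" for \<epsilon> t x v
    using uniformly_continuous_vanishing_outside_ball[OF \<psi>c \<psi>R]
    by (auto intro!: DERIV_imp_deriv has_real_derivative_chi[OF \<phi>c \<phi>M _ \<psi>M \<phi>_deriv] \<phi>_deriv)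
  moreover have "(ennreal (sqrt (A / b)))^2 = ennreal (A / b)" "0 < sqrt (A / b)"
    using nu12 by (simp_all add: b_def A_def ennreal_power)
  ultimately show ?thesis
    using F by (auto intro!: exI[of _ "sqrt (A / b)"] L2F_sq_chi_minus_tendsto_0 L2F_sq_chi_le
        \<phi>c \<phi>R \<phi>M \<psi>c \<psi>R \<psi>M)
qed

end
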